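(* Let $n$ be a positive integer, $q=2^n$, $a_1\in\mathbb{F}_q^{*}$ and $b\in\mathbb{F}_{q^2}^{*}$. Define the Boolean function $h_1:\mathbb{F}_{q^2}\to\mathbb{F}_2$ by $h_1(x)=\mathrm{Tr}_1^{2n}\!\left(\frac{a_1}{x^{q-1}+b}\right)$. Then $h_1$ is bent if and only if one of the following conditions holds: (1) $b\in U\setminus\{1\}$ and $\mathrm{Tr}_1^{2n}\!\left(\frac{a_1}{b}\right)=0$; (2) $b\in\mathbb{F}_{q^2}^{*}\setminus U$, $\mathcal{K}_n\!\left(\frac{a_1}{1+b\overline{b}}\right)=0$ and $\mathrm{Tr}_1^{n}\!\left(\frac{a_1(b+\overline{b})}{(1+b\overline{b})\,b\overline{b}}\right)=0$.
   Context: For $k\mid m$, $\mathrm{Tr}_k^{m}(x)=x+x^{2^k}+\cdots+x^{2^{(m/k-1)k}}$ is the trace from $\mathbb{F}_{2^m}$ to $\mathbb{F}_{2^k}$. For $x\in\mathbb{F}_{q^2}$ ($q=2^n$) write $\overline{x}=x^{q}$. The unit circle is $U=\{\eta\in\mathbb{F}_{q^2}:\eta^{q+1}=1\}$. Division by zero is interpreted with the convention $\frac{1}{0}=0$ (i.e. $z^{-1}$ means $z^{q^2-2}$). The binary Kloosterman sum is $\mathcal{K}_n(a)=\sum_{x\in\mathbb{F}_{2^n}}(-1)^{\mathrm{Tr}_1^n(\frac1x+ax)}$ (with $\frac10=0$). A Boolean function $f:\mathbb{F}_{2^{m}}\to\mathbb{F}_2$ is bent if its Walsh transform $W_f(\omega)=\sum_{x\in\mathbb{F}_{2^m}}(-1)^{f(x)+\mathrm{Tr}_1^m(\omega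 x)}$ satisfies $W_f(\omega)^2=2^m$ for all $\omega\in\mathbb{F}_{2^m}$. *)

theory Defs
  imports Main
begin

definition tr :: "nat \<Rightarrow> nat \<Rightarrow> 'a::field \<Rightarrow> 'a" where
  "tr k m x = (\<Sum>i<m div k. x ^ (2 ^ (i * k)))"

definition chi :: "'a::field \<Rightarrow> int" where
  "chi y = (if y = 0 then 1 else -1)"

text \<open>Walsh transform of f : GF(2^m) -> GF(2) (values 0/1 inside the field).\<close>
definition walsh :: "nat \<Rightarrow> ('a::{field,finite} \<Rightarrow> 'a) \<Rightarrow> 'a \<Rightarrow> int" where
  "walsh m f w = (\<Sum>x\<in>UNIV. chi (f x + tr 1 m (w * x)))"

definition bent :: "nat \<Rightarrow> ('a::{field,finite} \<Rightarrow> 'a) \<Rightarrow> bool" where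
  "bent m f \<longleftrightarrow> (\<forall>w. (walsh m f w)\<^sup>2 = 2 ^ m)"

definition subF :: "nat \<Rightarrow> 'a::field set" where
  "subF n = {x. x ^ (2 ^ n) = x}"

definition unit_circle :: "nat \<Rightarrow> 'a::field set" where
  "unit_circle n = {eta. eta ^ (2 ^ n + 1) = 1}"

text \<open>Binary Kloosterman sum over the subfield GF(2^n); inverse 0 = 0 in Isabelle.\<close>
definition kloosterman :: "nat \<Rightarrow> 'a::{field,finite} \<Rightarrow> int" where
  "kloosterman n a = (\<Sum>x\<in>subF n. chi (tr 1 n (inverse x + a * x)))"

end

theory Submission
  imports Defs "HOL-Computational_Algebra.Polynomial" "HOL-Computational_Algebra.Primes"
begin

text \<open>
  Write \<open>q = 2^n\<close>. The map \<open>x \<mapsto> x^(q-1)\<close> sends the nonzero elements onto the unit circle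
  \<open>U\<close>, and its fibres are the cosets of \<open>GF(q)\<^sup>*\<close>. Summing over these fibres, a function of the form
  \<open>f x = g (x^(q-1))\<close> has Walsh transform \<open>chi (g 0) + q chi (g (w^(1-q))) - \<Lambda>\<close> at \<open>w \<noteq> 0\<close>
  and \<open>chi (g 0) + (q - 1) \<Lambda>\<close> at \<open>0\<close>, where \<open>\<Lambda> = (\<Sum>u\<in>U. chi (g u))\<close>; so \<open>f\<close> is bent
  iff \<open>\<Lambda> = chi (g 0)\<close>.

  For \<open>g u = Tr (a1 / (u + b))\<close> and \<open>b \<in> U\<close>, the map \<open>u \<mapsto> b / (u + b)\<close> sends \<open>U - {b}\<close> onto the
  coset \<open>{y. y + y^q = 1}\<close> of \<open>GF(q)\<close>, on which the character sum vanishes unless \<open>a1 / b \<in> GF(q)\<close>,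
  i.e. \<open>b = 1\<close>. For \<open>b \<notin> U\<close>, the Moebius map \<open>u \<mapsto> \<gamma> / (u + b) + b^q\<close> with
  \<open>\<gamma> = 1 + b^(q+1)\<close> permutes \<open>U\<close> and gives \<open>\<Lambda> = chi (Tr (A b^q)) (1 - K A)\<close> with \<open>A = a1 / \<gamma>\<close>,
  by the classical identity \<open>(\<Sum>w\<in>U. chi (Tr (A w))) = 1 - K A\<close>: after \<open>w \<mapsto> w^2\<close> and
  \<open>x \<mapsto> x / sqrt A\<close> both sides are sums of \<open>chi (Tr_n (sqrt A (w + 1/w)))\<close>, and \<open>w \<mapsto> w + 1/w\<close>
  covers \<open>GF(q)\<^sup>*\<close> exactly twice by \<open>(U - {1}) \<union> (GF(q) - {0, 1})\<close>. The same two-to-one map shows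
  that \<open>4\<close> divides \<open>K A\<close> for \<open>n \<ge> 2\<close>, so \<open>\<Lambda> = \<plusminus>chi (g 0)\<close> forces \<open>K A = 0\<close>.
\<close>

section \<open>Characters, counting and characteristic two\<close>

lemma tr_1_eq: "tr 1 m x = (\<Sum>i<m. x ^ 2 ^ i)"
  by (simp add: tr_def)

lemma sum_lessThan_add: "(\<Sum>i<k + (m::nat). f i) = (\<Sum>i<k. f i) + (\<Sum>i<m. f (k + i))"
  by (induction m) (simp_all add: add.assoc)

lemma chi_cases: "chi z = 1 \<or> chi z = -1"
  by (simp add: chi_def)

lemma chi_0 [simp]: "chi 0 = 1"
  by (simp add: chi_def)

lemma chi_1 [simp]: "chi 1 = -1"
  by (simp add: chi_def)

lemma chi_mult_self [simp]: "chi z * chi z = 1"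
  by (simp add: chi_def)

lemma abs_chi [simp]: "\<bar>chi z\<bar> = 1"
  by (simp add: chi_def)

lemma abs_sum_chi_le_card: "\<bar>\<Sum>u\<in>S. chi (f u)\<bar> \<le> int (card S)"
  using sum_abs[of "\<lambda>u. chi (f u)" S] by simp

lemma even_sum_chi_add_card:
  assumes "finite S"
  shows "even ((\<Sum>u\<in>S. chi (f u)) + int (card S))"
  using assms
proof (induction S rule: finite_induct)
  case (insert x S)
  have "even (chi (f x) + 1)" by (simp add: chi_def)
  with insert show ?case by (simp add: algebra_simps)
qed simp

lemma card_fibres_eq_if_card_bounds:
  assumes "finite A" "finite B" "f ` A \<subseteq> B" "card B \<le> m"
    and fibre_le: "\<And>y. y \<in> B \<Longrightarrow> card {x\<in>A. f x = y} \<le> k"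
    and "m * k \<le> card A" "0 < k"
  shows "\<And>y. y \<in> B \<Longrightarrow> card {x\<in>A. f x = y} = k" and "card B = m"
proof -
  have "card A = (\<Sum>y\<in>B. card {x\<in>A. f x = y})"
    using sum.group[OF assms(1-3), of "\<lambda>_. 1::nat"] by simp
  moreover have "(\<Sum>y\<in>B. card {x\<in>A. f x = y}) \<le> card B * k"
    using sum_mono[OF fibre_le, of B] by simp
  moreover have "card B * k \<le> m * k" using assms(4) by (rule mult_le_mono1)
  ultimately have "(\<Sum>y\<in>B. card {x\<in>A. f x = y}) = card B * k" and "card B * k = m * k"
    using assms(6) by linarith+
  then show "card B = m" using \<open>0 < k\<close> by simp
  have sum_eq: "(\<Sum>y\<in>B. card {x\<in>A. f x = y}) = (\<Sum>y\<in>B. k)"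
    using \<open>_ = card B * k\<close> by simp
  show "card {x\<in>A. f x = y} = k" if "y \<in> B" for y
    using sum_mono_inv[OF sum_eq fibre_le that assms(2)] .
qed

lemma card_roots_power_add_linear_le:
  fixes a c :: "'a::idom"
  assumes "2 \<le> k"
  shows "card {x. x ^ k + a * x = c} \<le> k"
proof -
  define p where "p = monom 1 k + [:-c, a:]"
  have "degree [:-c, a:] < k" using assms degree_pCons_le[of "-c" "[:a:]"] by simp
  then have deg: "degree p = k" by (simp add: p_def degree_add_eq_left degree_monom_eq)
  then have "p \<noteq> 0" using assms by auto
  moreover have "{x. poly p x = 0} = {x. x ^ k + a * x = c}"
    by (auto simp: p_def poly_monom algebra_simps)
  ultimately show ?thesis using card_poly_roots_bound[of p] deg by simp
qed

lemma plus_inverse_eq_iff: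
  fixes r s :: "'a::field"
  assumes "r \<noteq> 0" "s \<noteq> 0"
  shows "r + inverse r = s + inverse s \<longleftrightarrow> r = s \<or> r = inverse s"
proof -
  have "r + inverse r - (s + inverse s) = (r - s) * (r * s - 1) / (r * s)"
    using assms by (simp add: field_simps)
  then have "r + inverse r = s + inverse s \<longleftrightarrow> r = s \<or> r * s = 1"
    using assms by auto
  also have "r * s = 1 \<longleftrightarrow> r = inverse s"
    using assms by (auto simp: field_simps)
  finally show ?thesis .
qed

lemma two_eq_0_CHAR_2:
  assumes "CHAR('a::semiring_1) = 2"
  shows "(2::'a) = 0"
  using of_nat_CHAR[where 'a='a] by (simp add: assms)

lemma add_self_CHAR_2:
  assumes "CHAR('a::ring_1) = 2"
  shows "x + x = (0::'a)"
  using uminus_CHAR_2[OF assms, of x] by (metis add.right_inverse)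

lemma add_eq_0_iff_CHAR_2:
  assumes "CHAR('a::ring_1) = 2"
  shows "x + y = 0 \<longleftrightarrow> x = (y::'a)"
  using uminus_CHAR_2[OF assms, of y] by (metis eq_neg_iff_add_eq_0)

lemma power_two_power_add_CHAR_2:
  assumes "CHAR('a::comm_semiring_1) = 2"
  shows "(x + y) ^ 2 ^ k = x ^ 2 ^ k + (y::'a) ^ 2 ^ k"
  by (rule freshmans_dream') (simp_all add: assms)

lemma power_two_power_sum_CHAR_2:
  assumes "CHAR('a::comm_semiring_1) = 2"
  shows "(\<Sum>i\<in>A. f i) ^ 2 ^ k = (\<Sum>i\<in>A. (f i :: 'a) ^ 2 ^ k)"
  by (rule freshmans_dream_sum') (simp_all add: assms)

lemma inj_square_CHAR_2:
  assumes "CHAR('a::idom) = 2"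
  shows "inj (\<lambda>x::'a. x ^ 2)"
proof (rule injI)
  fix x y :: 'a
  assume "x ^ 2 = y ^ 2"
  have "(x + y) * (x + y) = x ^ 2 + y ^ 2 + (x * y + x * y)" by (simp add: algebra_simps power2_eq_square)
  also have "\<dots> = 0" using \<open>x ^ 2 = y ^ 2\<close> by (simp add: add_self_CHAR_2[OF assms])
  finally show "x = y" using add_eq_0_iff_CHAR_2[OF assms] by simp
qed

lemma square_eq_1_CHAR_2:
  assumes "CHAR('a::idom) = 2" and "r * r = (1::'a)"
  shows "r = 1"
  using injD[OF inj_square_CHAR_2[OF assms(1)], of r 1] assms(2) by (simp add: power2_eq_square)

lemma square_image_eq_CHAR_2:
  assumes "CHAR('a::idom) = 2" and "finite S" and "\<And>x. x \<in> S \<Longrightarrow> x ^ 2 \<in> S"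
  shows "(\<lambda>x::'a. x ^ 2) ` S = S"
  using assms inj_square_CHAR_2[OF assms(1)] by (intro endo_inj_surj) (auto intro: inj_on_subset)

lemma plus_inverse_eq_0_iff_CHAR_2:
  assumes "CHAR('a::field) = 2"
  shows "w + inverse w = 0 \<longleftrightarrow> w = 0 \<or> w = (1::'a)"
proof (cases "w = 0")
  case False
  have "w + inverse w = 0 \<longleftrightarrow> w = inverse w"
    by (rule add_eq_0_iff_CHAR_2[OF assms])
  also have "\<dots> \<longleftrightarrow> w * w = 1"
    using False by (auto simp: field_simps)
  also have "\<dots> \<longleftrightarrow> w = 1"
    using square_eq_1_CHAR_2[OF assms, of w] by auto
  finally show ?thesis using False by simp
qed simp

lemma sum_eq_0_if_translation_negates:
  fixes h :: "'a::ring_1 \<Rightarrow> int"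
  assumes "CHAR('a) = 2"
    and "\<And>x. x \<in> S \<Longrightarrow> x + t \<in> S" and "\<And>x. x \<in> S \<Longrightarrow> h (x + t) = - h x"
  shows "(\<Sum>x\<in>S. h x) = 0"
proof -
  have "(\<Sum>x\<in>S. h x) = (\<Sum>x\<in>S. h (x + t))"
    by (rule sum.reindex_bij_witness[of _ "\<lambda>x. x + t" "\<lambda>x. x + t"])
      (use assms in \<open>auto simp: add.assoc add_self_CHAR_2\<close>)
  also have "\<dots> = - (\<Sum>x\<in>S. h x)"
    using assms(3) by (simp add: sum_negf)
  finally show ?thesis by simp
qed

lemma tr_0 [simp]: "tr 1 m 0 = 0"
  unfolding tr_1_eq by (simp add: power_0_left)

lemma tr_add:
  assumes "CHAR('a::field) = 2"
  shows "tr 1 m (x + y) = tr 1 m x + tr 1 m (y::'a)"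
  unfolding tr_1_eq by (simp add: power_two_power_add_CHAR_2[OF assms] sum.distrib)

lemma tr_square_eq:
  assumes "x ^ 2 ^ m = x"
  shows "tr 1 m (x ^ 2) = tr 1 m x"
proof -
  have "x + tr 1 m (x ^ 2) = x + (\<Sum>i<m. x ^ 2 ^ Suc i)"
    unfolding tr_1_eq by (simp add: power_mult[symmetric] mult.commute)
  also have "\<dots> = (\<Sum>i<Suc m. x ^ 2 ^ i)"
    by (subst sum.lessThan_Suc_shift) simp
  also have "\<dots> = x + tr 1 m x"
    unfolding tr_1_eq using assms by (simp add: add.commute)
  finally show ?thesis by simp
qed

lemma tr_in_01:
  assumes "CHAR('a::field) = 2" and "x ^ 2 ^ m = (x::'a)"
  shows "tr 1 m x \<in> {0, 1}"
proof -
  have "(tr 1 m x) ^ 2 ^ 1 = tr 1 m (x ^ 2)"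
    unfolding tr_1_eq power_two_power_sum_CHAR_2[OF assms(1)]
    by (simp add: power_mult[symmetric] mult.commute)
  also have "\<dots> = tr 1 m x" using assms(2) by (rule tr_square_eq)
  finally have "tr 1 m x * (tr 1 m x - 1) = 0" by (simp add: algebra_simps power2_eq_square)
  then show ?thesis by simp
qed

lemma tr_double:
  assumes "CHAR('a::field) = 2"
  shows "tr 1 (2 * m) x = tr 1 m (x + (x::'a) ^ 2 ^ m)"
proof -
  have "tr 1 (2 * m) x = (\<Sum>i<m. x ^ 2 ^ i) + (\<Sum>i<m. x ^ 2 ^ (m + i))"
    unfolding tr_1_eq mult_2 by (rule sum_lessThan_add)
  also have "\<dots> = tr 1 m (x + x ^ 2 ^ m)"
    unfolding tr_1_eq by (simp add: power_two_power_add_CHAR_2[OF assms] sum.distrib power_add power_mult)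
  finally show ?thesis .
qed

lemma chi_add_CHAR_2:
  assumes "CHAR('a::field) = 2" and "z \<in> {0, 1}" and "w \<in> {0, (1::'a)}"
  shows "chi (z + w) = chi z * chi w"
  using assms add_self_CHAR_2[OF assms(1), of 1] by (auto simp: chi_def)

lemma sum_plus_inverse_CHAR_2:
  fixes S :: "'a::field set" and f :: "'a \<Rightarrow> 'b::comm_semiring_1"
  assumes "CHAR('a) = 2" "finite S" "0 \<notin> S" "1 \<notin> S" "\<And>w. w \<in> S \<Longrightarrow> inverse w \<in> S"
  shows "(\<Sum>w\<in>S. f (w + inverse w)) = 2 * (\<Sum>y\<in>(\<lambda>w. w + inverse w) ` S. f y)"
proof -
  let ?psi = "\<lambda>w::'a. w + inverse w"
  have card_fibre: "card {w\<in>S. ?psi w = ?psi w0} = 2" if "w0 \<in> S" for w0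
  proof -
    have "w0 \<noteq> 0" "w0 \<noteq> 1" using that assms(3,4) by auto
    then have "w0 \<noteq> inverse w0"
      using plus_inverse_eq_0_iff_CHAR_2[OF assms(1), of w0] add_self_CHAR_2[OF assms(1)] by auto
    moreover have "{w\<in>S. ?psi w = ?psi w0} = {w0, inverse w0}"
      using that assms(3,5) plus_inverse_eq_iff[of _ w0] \<open>w0 \<noteq> 0\<close>
      by (auto simp: add.commute) (metis)
    ultimately show ?thesis by simp
  qed
  have "(\<Sum>w\<in>S. f (?psi w)) = (\<Sum>y\<in>?psi ` S. \<Sum>w\<in>{w\<in>S. ?psi w = y}. f (?psi w))"
    by (rule sum.group[symmetric]) (use assms(2) in auto)
  also have "\<dots> = (\<Sum>y\<in>?psi ` S. 2 * f y)"
    by (rule sum.cong) (auto simp: card_fibre)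
  finally show ?thesis by (simp add: sum_distrib_left)
qed

section \<open>The field of order \<open>2^(2n)\<close>\<close>

locale gf2_2n =
  fixes n :: nat and field_type :: "'a::{field,finite} itself"
  assumes n_pos: "0 < n" and card_UNIV: "card (UNIV :: 'a set) = 2 ^ (2 * n)"
begin

(* Otherwise the simplifier turns tr 1 into tr (Suc 0), and the trace lemmas no longer apply. *)
declare One_nat_def [simp del]

lemma CHAR_eq_2: "CHAR('a) = 2"
proof (rule CHAR_eq_posI)
  have "(\<Sum>x\<in>UNIV. x + 1) = (\<Sum>x\<in>UNIV. x :: 'a)"
    by (rule sum.reindex_bij_witness[of _ "\<lambda>x. x - 1" "\<lambda>x. x + 1"]) auto
  then have "(2::'a) ^ (2 * n) = 0"
    using card_UNIV by (simp add: sum.distrib)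
  then show "of_nat 2 = (0::'a)" by simp
  show "of_nat k \<noteq> (0::'a)" if "0 < k" "k < 2" for k
    using that by (simp add: numeral_2_eq_2 less_Suc_eq)
qed simp

lemma two_eq_0 [simp]: "(2::'a) = 0"
  by (rule two_eq_0_CHAR_2[OF CHAR_eq_2])

lemma add_self [simp]: "(x::'a) + x = 0"
  by (rule add_self_CHAR_2[OF CHAR_eq_2])

lemma power_card_minus_1:
  assumes "x \<noteq> 0"
  shows "x ^ (2 ^ (2 * n) - 1) = (1::'a)"
proof -
  have "(\<Prod>y\<in>UNIV - {0}. x * y) = (\<Prod>y\<in>UNIV - {0}. y)"
    by (rule prod.reindex_bij_witness[of _ "\<lambda>y. y / x" "\<lambda>y. x * y"]) (use assms in auto)
  then have "x ^ card (UNIV - {0::'a}) = 1" by (simp add: prod.distrib)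
  then show ?thesis by (simp add: card_Diff_singleton card_UNIV)
qed

lemma power_card [simp]: "x ^ 2 ^ (2 * n) = (x::'a)"
proof (cases "x = 0")
  case False
  have "x ^ 2 ^ (2 * n) = x * x ^ (2 ^ (2 * n) - 1)"
    by (simp flip: power_Suc)
  then show ?thesis using power_card_minus_1[OF False] by simp
qed simp

lemma two_le_two_power_n: "2 \<le> (2::nat) ^ n"
  using n_pos by (cases n) simp_all

lemma two_power_2n: "(2::nat) ^ (2 * n) = 2 ^ n * 2 ^ n"
  by (simp flip: power_add add: mult_2)

abbreviation cj :: "'a \<Rightarrow> 'a" where "cj x \<equiv> x ^ 2 ^ n"

lemma cj_add: "cj (x + y) = cj x + cj (y::'a)"
  by (rule power_two_power_add_CHAR_2[OF CHAR_eq_2])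

lemma cj_cj [simp]: "cj (cj x) = (x::'a)"
  using power_card[of x] by (simp flip: power_mult power_add add: mult_2)

lemma subF_iff: "(x::'a) \<in> subF n \<longleftrightarrow> cj x = x"
  by (simp add: subF_def)

lemma unit_circle_iff: "(u::'a) \<in> unit_circle n \<longleftrightarrow> u * cj u = 1"
  by (simp add: unit_circle_def power_add mult.commute)

lemma cj_unit_circle: "(u::'a) \<in> unit_circle n \<Longrightarrow> cj u = inverse u"
  by (metis inverse_unique unit_circle_iff)

lemma unit_circle_nonzero: "(u::'a) \<in> unit_circle n \<Longrightarrow> u \<noteq> 0"
  by (auto simp: unit_circle_iff)

lemma one_unit_circle [simp]: "(1::'a) \<in> unit_circle n"
  by (simp add: unit_circle_iff)

lemma inverse_unit_circle: "(u::'a) \<in> unit_circle n \<Longrightarrow> inverse u \<in> unit_circle n"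
  by (simp add: unit_circle_iff power_inverse flip: inverse_mult_distrib)

lemma mult_unit_circle: "(u::'a) \<in> unit_circle n \<Longrightarrow> v \<in> unit_circle n \<Longrightarrow> u * v \<in> unit_circle n"
  by (simp add: unit_circle_iff power_mult_distrib) (metis mult.assoc mult.left_commute mult_1)

lemma unit_circle_subF_eq_1: "(u::'a) \<in> unit_circle n \<Longrightarrow> u \<in> subF n \<Longrightarrow> u = 1"
  by (rule square_eq_1_CHAR_2[OF CHAR_eq_2]) (simp add: unit_circle_iff subF_iff)

lemma add_cj_subF: "(x::'a) + cj x \<in> subF n"
  by (simp add: subF_iff cj_add add.commute)

lemma mult_cj_subF: "(x::'a) * cj x \<in> subF n"
  by (simp add: subF_iff power_mult_distrib mult.commute)

lemma
  shows card_add_cj_fibre: "y \<in> subF n \<Longrightarrow> card {x::'a. x + cj x = y} = 2 ^ n"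
    and card_subF: "card (subF n :: 'a set) = 2 ^ n"
proof -
  have card_roots: "card {x::'a. x ^ 2 ^ n + 1 * x = y} \<le> 2 ^ n" for y
    using two_le_two_power_n by (rule card_roots_power_add_linear_le)
  have "subF n = {x::'a. x ^ 2 ^ n + 1 * x = 0}"
    by (simp add: subF_def add_eq_0_iff_CHAR_2[OF CHAR_eq_2])
  then have "card (subF n :: 'a set) \<le> 2 ^ n" using card_roots by simp
  moreover have "card {x::'a. x + cj x = y} \<le> 2 ^ n" for y
    using card_roots[of y] by (simp add: add.commute)
  moreover have "2 ^ n * 2 ^ n \<le> card (UNIV :: 'a set)"
    by (simp add: card_UNIV flip: power_add mult_2)
  moreover have "range (\<lambda>x::'a. x + cj x) \<subseteq> subF n"
    using add_cj_subF by blast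
  ultimately show "y \<in> subF n \<Longrightarrow> card {x::'a. x + cj x = y} = 2 ^ n"
    and "card (subF n :: 'a set) = 2 ^ n"
    using card_fibres_eq_if_card_bounds[of UNIV "subF n" "\<lambda>x::'a. x + cj x" "2 ^ n" "2 ^ n"]
    by simp_all
qed

definition polar :: "'a \<Rightarrow> 'a" where "polar x = x ^ (2 ^ n - 1)"

lemma polar_0 [simp]: "polar 0 = 0"
  using two_le_two_power_n by (simp add: polar_def)

lemma polar_1 [simp]: "polar 1 = 1"
  by (simp add: polar_def)

lemma polar_mult: "polar (x * y) = polar x * polar y"
  by (simp add: polar_def power_mult_distrib)

lemma polar_divide: "polar (x / y) = polar x / polar y"
  by (simp add: polar_def power_divide)

lemma polar_eq_0_iff [simp]: "polar x = 0 \<longleftrightarrow> x = 0"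
  using two_le_two_power_n by (simp add: polar_def)

lemma cj_eq_mult_polar: "cj x = x * polar x"
  using two_le_two_power_n by (simp add: polar_def flip: power_Suc)

lemma subF_iff_polar: "x \<in> subF n \<longleftrightarrow> x = 0 \<or> polar x = 1"
  by (auto simp: subF_iff cj_eq_mult_polar)

lemma polar_unit_circle:
  assumes "x \<noteq> 0"
  shows "polar x \<in> unit_circle n"
proof -
  have exp: "(2 ^ n - 1) * (2 ^ n + 1) = (2::nat) ^ (2 * n) - 1"
    unfolding two_power_2n by (simp add: algebra_simps)
  have "(polar x) ^ (2 ^ n + 1) = x ^ ((2 ^ n - 1) * (2 ^ n + 1))"
    by (simp only: polar_def power_mult)
  also have "\<dots> = 1"
    unfolding exp by (rule power_card_minus_1[OF assms])
  finally show ?thesis by (simp add: unit_circle_def)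
qed

lemma polar_fibre:
  assumes "v \<noteq> 0"
  shows "{x. x \<noteq> 0 \<and> polar x = polar v} = (\<lambda>t. t * v) ` (subF n - {0})"
proof (intro equalityI subsetI)
  fix x assume "x \<in> {x. x \<noteq> 0 \<and> polar x = polar v}"
  then have "x / v \<in> subF n - {0}" and "x = x / v * v"
    using assms by (auto simp: subF_iff_polar polar_divide)
  then show "x \<in> (\<lambda>t. t * v) ` (subF n - {0})" by blast
qed (use assms in \<open>auto simp: subF_iff_polar polar_mult\<close>)

lemma card_polar_fibre:
  assumes "v \<noteq> 0"
  shows "card {x. x \<noteq> 0 \<and> polar x = polar v} = 2 ^ n - 1"
proof -
  have "inj_on (\<lambda>t. t * v) (subF n - {0})" using assms by (auto intro: inj_onI)
  then show ?thesis
    using assms by (simp add: polar_fibre card_image card_Diff_singleton card_subF subF_iff)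
qed

lemma card_unit_circle_le: "card (unit_circle n :: 'a set) \<le> 2 ^ n + 1"
proof -
  have "unit_circle n = {x::'a. x ^ (2 ^ n + 1) + 0 * x = 1}"
    by (simp add: unit_circle_def)
  then show ?thesis
    using card_roots_power_add_linear_le[of "2 ^ n + 1" 0 1] two_le_two_power_n by simp
qed

lemma card_polar_fibre_le: "card {x \<in> UNIV - {0}. polar x = u} \<le> 2 ^ n - 1"
proof (cases "\<exists>v. v \<noteq> 0 \<and> polar v = u")
  case True
  then obtain v where "v \<noteq> 0" "polar v = u" by blast
  then show ?thesis using card_polar_fibre[of v] by (simp add: conj_commute)
next
  case False
  then have "{x \<in> UNIV - {0}. polar x = u} = {}" by auto
  then show ?thesis by (metis card.empty zero_le)
qed

lemma
  shows card_unit_circle: "card (unit_circle n :: 'a set) = 2 ^ n + 1"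
    and polar_surj: "u \<in> unit_circle n \<Longrightarrow> \<exists>v. v \<noteq> 0 \<and> polar v = u"
proof -
  have "card (UNIV - {0::'a}) = 2 ^ n * 2 ^ n - 1"
    by (simp add: card_Diff_singleton card_UNIV flip: two_power_2n)
  then have "(2 ^ n + 1) * (2 ^ n - 1) \<le> card (UNIV - {0::'a})"
    by (simp add: algebra_simps)
  moreover have "polar ` (UNIV - {0}) \<subseteq> unit_circle n"
    using polar_unit_circle by blast
  moreover have "0 < (2::nat) ^ n - 1"
    using two_le_two_power_n by simp
  ultimately have "card (unit_circle n :: 'a set) = 2 ^ n + 1"
    and fibre: "u \<in> unit_circle n \<Longrightarrow> card {x \<in> UNIV - {0}. polar x = u} = 2 ^ n - 1"
    using card_fibres_eq_if_card_bounds[OF _ _ _ card_unit_circle_le card_polar_fibre_le]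
    by simp_all
  then show "card (unit_circle n :: 'a set) = 2 ^ n + 1" by simp
  show "\<exists>v. v \<noteq> 0 \<and> polar v = u" if "u \<in> unit_circle n"
  proof -
    have "card {x \<in> UNIV - {0}. polar x = u} \<noteq> 0"
      using fibre[OF that] two_le_two_power_n by simp
    then show ?thesis by (metis (mono_tags, lifting) card.empty Collect_empty_eq DiffE singletonI)
  qed
qed

lemma tr_n_in_01: "(t::'a) \<in> subF n \<Longrightarrow> tr 1 n t \<in> {0, 1}"
  by (rule tr_in_01[OF CHAR_eq_2]) (simp add: subF_iff)

lemma tr_2n_in_01: "tr 1 (2 * n) (x::'a) \<in> {0, 1}"
  by (rule tr_in_01[OF CHAR_eq_2]) simp

lemma chi_tr_2n_add: "chi (tr 1 (2 * n) (x + y)) = chi (tr 1 (2 * n) x) * chi (tr 1 (2 * n) (y::'a))"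
  unfolding tr_add[OF CHAR_eq_2] by (rule chi_add_CHAR_2[OF CHAR_eq_2 tr_2n_in_01 tr_2n_in_01])

lemma tr_2n_mult_subF:
  assumes "(t::'a) \<in> subF n"
  shows "tr 1 (2 * n) (t * z) = tr 1 n (t * (z + cj z))"
  using assms by (simp add: tr_double[OF CHAR_eq_2] subF_iff power_mult_distrib distrib_left)

lemma tr_2n_subF: "(t::'a) \<in> subF n \<Longrightarrow> tr 1 (2 * n) t = 0"
  using tr_2n_mult_subF[of t 1] by simp

lemma ex_tr_n_eq_1: "\<exists>t\<in>subF n. tr 1 n t = (1::'a)"
proof (rule ccontr)
  assume "\<not> ?thesis"
  then have tr_0: "tr 1 n t = 0" if "t \<in> subF n" for t :: 'a
    using that tr_n_in_01[OF that] by auto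
  define p :: "'a poly" where "p = (\<Sum>i<n. monom 1 (2 ^ i))"
  have "coeff p (2 ^ (n - 1)) = 1"
    using n_pos by (simp add: p_def coeff_sum coeff_monom power_inject_exp)
  then have "p \<noteq> 0" by auto
  moreover have "degree p \<le> 2 ^ (n - 1)"
    unfolding p_def by (rule degree_sum_le) (auto simp: degree_monom_eq)
  moreover have "subF n \<subseteq> {x. poly p x = 0}"
    using tr_0 by (auto simp: p_def poly_sum poly_monom tr_1_eq)
  ultimately have "card (subF n :: 'a set) \<le> 2 ^ (n - 1)"
    using card_mono[of "{x. poly p x = 0}" "subF n"] card_poly_roots_bound[of p]
    by (meson finite order.trans)
  then show False
    using n_pos by (simp add: card_subF)
qed

lemma ex_tr_n_mult_eq_1:
  assumes "(e::'a) \<in> subF n" "e \<noteq> 0"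
  shows "\<exists>t\<in>subF n. tr 1 n (t * e) = 1"
proof -
  obtain t0 :: 'a where "t0 \<in> subF n" "tr 1 n t0 = 1" using ex_tr_n_eq_1 by blast
  then have "t0 / e \<in> subF n" "tr 1 n (t0 / e * e) = 1"
    using assms by (simp_all add: subF_iff power_divide)
  then show ?thesis by blast
qed

lemma sum_subF_chi_tr_n:
  assumes e: "(e::'a) \<in> subF n"
  shows "(\<Sum>t\<in>subF n. chi (tr 1 n (t * e))) = (if e = 0 then 2 ^ n else 0)"
proof (cases "e = 0")
  case True
  then show ?thesis by (simp add: card_subF)
next
  case False
  obtain t1 where "t1 \<in> subF n" "tr 1 n (t1 * e) = 1"
    using ex_tr_n_mult_eq_1[OF e False] by blast
  have "(\<Sum>t\<in>subF n. chi (tr 1 n (t * e))) = 0"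
  proof (rule sum_eq_0_if_translation_negates[OF CHAR_eq_2, where t = t1])
    fix t :: 'a assume "t \<in> subF n"
    then show "t + t1 \<in> subF n"
      using \<open>t1 \<in> subF n\<close> by (simp add: subF_iff cj_add)
    have "tr 1 n (t * e) \<in> {0, 1}"
      using \<open>t \<in> subF n\<close> e by (intro tr_n_in_01) (simp add: subF_iff power_mult_distrib)
    moreover have "tr 1 n ((t + t1) * e) = tr 1 n (t * e) + 1"
      using \<open>tr 1 n (t1 * e) = 1\<close> by (simp add: distrib_right tr_add[OF CHAR_eq_2])
    ultimately show "chi (tr 1 n ((t + t1) * e)) = - chi (tr 1 n (t * e))"
      by (auto simp: chi_def)
  qed
  then show ?thesis using False by simp
qed

section \<open>Walsh transforms of functions of \<open>x^(q-1)\<close>\<close>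

lemma sum_polar_fibre_chi_tr_2n:
  assumes "u \<in> unit_circle n"
  shows "(\<Sum>x | x \<noteq> 0 \<and> polar x = u. chi (tr 1 (2 * n) (w * x)))
    = (if w = 0 \<or> polar w * u = 1 then 2 ^ n else 0) - 1"
proof -
  obtain v where v: "v \<noteq> 0" "polar v = u" using polar_surj[OF assms] by blast
  define e where "e = w * v + cj (w * v)"
  have "inj_on (\<lambda>t. t * v) (subF n - {0})" using v by (auto intro: inj_onI)
  then have "(\<Sum>x | x \<noteq> 0 \<and> polar x = u. chi (tr 1 (2 * n) (w * x)))
      = (\<Sum>t\<in>subF n - {0}. chi (tr 1 (2 * n) (t * (w * v))))"
    using polar_fibre[OF v(1)] v(2) by (simp add: sum.reindex ac_simps)
  also have "\<dots> = (\<Sum>t\<in>subF n - {0}. chi (tr 1 n (t * e)))"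
    by (rule sum.cong) (simp_all add: e_def tr_2n_mult_subF)
  also have "\<dots> = (\<Sum>t\<in>subF n. chi (tr 1 n (t * e))) - 1"
    by (simp add: sum_diff1 subF_iff chi_def)
  also have "\<dots> = (if e = 0 then 2 ^ n else 0) - 1"
    by (simp add: sum_subF_chi_tr_n e_def add_cj_subF)
  also have "e = 0 \<longleftrightarrow> w * v \<in> subF n"
    unfolding e_def add_eq_0_iff_CHAR_2[OF CHAR_eq_2] subF_iff by (rule eq_commute)
  also have "\<dots> \<longleftrightarrow> w = 0 \<or> polar w * u = 1"
    using v by (simp add: subF_iff_polar polar_mult)
  finally show ?thesis .
qed

lemma walsh_polar:
  assumes g: "\<And>u. g u \<in> {0, 1}"
  defines "\<Lambda> \<equiv> \<Sum>u\<in>unit_circle n. chi (g u)"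
  shows "walsh (2 * n) (\<lambda>x. g (polar x)) w = chi (g 0)
    + (if w = 0 then (2 ^ n - 1) * \<Lambda> else 2 ^ n * chi (g (inverse (polar w))) - \<Lambda>)"
proof -
  let ?U = "unit_circle n :: 'a set"
  let ?c = "\<lambda>u. (if w = 0 \<or> polar w * u = 1 then 2 ^ n else 0) - 1 :: int"
  have "walsh (2 * n) (\<lambda>x. g (polar x)) w
      = chi (g 0) + (\<Sum>x\<in>UNIV - {0}. chi (g (polar x)) * chi (tr 1 (2 * n) (w * x)))"
    unfolding walsh_def
    by (simp add: sum.remove[of UNIV 0] chi_add_CHAR_2[OF CHAR_eq_2 g tr_2n_in_01])
  also have "(\<Sum>x\<in>UNIV - {0}. chi (g (polar x)) * chi (tr 1 (2 * n) (w * x)))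
      = (\<Sum>u\<in>?U. \<Sum>x | x \<noteq> 0 \<and> polar x = u. chi (g u) * chi (tr 1 (2 * n) (w * x)))"
  proof -
    have "polar ` (UNIV - {0}) \<subseteq> ?U" using polar_unit_circle by blast
    then show ?thesis by (subst sum.group[symmetric, of _ ?U polar]) (auto intro!: sum.cong)
  qed
  also have "\<dots> = (\<Sum>u\<in>?U. chi (g u) * ?c u)"
    by (simp add: sum_distrib_left[symmetric] sum_polar_fibre_chi_tr_2n)
  also have "\<dots> = (if w = 0 then (2 ^ n - 1) * \<Lambda> else 2 ^ n * chi (g (inverse (polar w))) - \<Lambda>)"
  proof (cases "w = 0")
    case True
    then show ?thesis by (simp add: \<Lambda>_def sum_distrib_left mult.commute)
  next
    case False
    define u0 where "u0 = inverse (polar w)"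
    have "u0 \<in> ?U" using False by (simp add: u0_def inverse_unit_circle polar_unit_circle)
    have "(\<Sum>u\<in>?U. chi (g u) * ?c u) = (\<Sum>u\<in>?U. (if u = u0 then 2 ^ n * chi (g u) else 0) - chi (g u))"
      using False by (intro sum.cong) (auto simp: u0_def field_simps)
    also have "\<dots> = 2 ^ n * chi (g u0) - \<Lambda>"
      using \<open>u0 \<in> ?U\<close> by (simp add: \<Lambda>_def sum_subtractf sum.delta)
    finally show ?thesis using False by (simp add: u0_def)
  qed
  finally show ?thesis .
qed

lemma bent_polar_iff:
  assumes g: "\<And>u. g u \<in> {0, 1}"
    and small: "\<bar>(\<Sum>u\<in>unit_circle n. chi (g u)) - chi (g 0)\<bar> < 2 * 2 ^ n"
  shows "bent (2 * n) (\<lambda>x. g (polar x)) \<longleftrightarrow> (\<Sum>u\<in>unit_circle n. chi (g u)) = chi (g 0)"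
proof
  let ?\<Lambda> = "\<Sum>u\<in>unit_circle n. chi (g u)"
  define d where "d = chi (g 0) - ?\<Lambda>"
  define q :: int where "q = 2 ^ n"
  have q_sq: "(2::int) ^ (2 * n) = q\<^sup>2"
    by (simp add: q_def power_mult mult.commute[of 2 n])
  assume "bent (2 * n) (\<lambda>x. g (polar x))"
  then have "(walsh (2 * n) (\<lambda>x. g (polar x)) 1)\<^sup>2 = q\<^sup>2"
    by (simp add: bent_def q_sq)
  moreover have "walsh (2 * n) (\<lambda>x. g (polar x)) 1 = d + q * chi (g 1)"
    by (rule trans[OF walsh_polar[OF g]]) (simp add: d_def q_def)
  moreover have "\<bar>d\<bar> < 2 * q" "0 < q"
    using small by (simp_all add: d_def q_def abs_minus_commute)
  ultimately have "d * (d + 2 * q * chi (g 1)) = 0"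
    using chi_cases[of "g 1"] by (auto simp: power2_eq_square algebra_simps)
  then have "d = 0 \<or> 2 * q * chi (g 1) = - d"
    by (simp add: add_eq_0_iff)
  then have "d = 0"
    using \<open>\<bar>d\<bar> < 2 * q\<close> \<open>0 < q\<close> chi_cases[of "g 1"] by auto
  then show "?\<Lambda> = chi (g 0)" by (simp add: d_def)
next
  assume \<Lambda>: "(\<Sum>u\<in>unit_circle n. chi (g u)) = chi (g 0)"
  show "bent (2 * n) (\<lambda>x. g (polar x))"
    unfolding bent_def
  proof
    fix w
    define z where "z = (if w = 0 then g 0 else g (inverse (polar w)))"
    have "walsh (2 * n) (\<lambda>x. g (polar x)) w = 2 ^ n * chi z"
      by (subst walsh_polar[OF g]) (simp add: z_def \<Lambda> algebra_simps)
    then have "(walsh (2 * n) (\<lambda>x. g (polar x)) w)\<^sup>2 = (2 ^ n)\<^sup>2"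
      by (simp only: power_mult_distrib power2_eq_square[of "chi z"] chi_mult_self mult_1_right)
    also have "\<dots> = 2 ^ (2 * n)"
      by (simp only: power_mult[symmetric] mult.commute[of n 2])
    finally show "(walsh (2 * n) (\<lambda>x. g (polar x)) w)\<^sup>2 = 2 ^ (2 * n)" .
  qed
qed

section \<open>Character sums over the unit circle\<close>

lemma bij_betw_unit_circle_trace_one:
  assumes b: "b \<in> unit_circle n"
  shows "bij_betw (\<lambda>u. b / (u + b)) (unit_circle n - {b}) {y. y + cj y = 1}"
proof (rule bij_betw_byWitness[where f' = "\<lambda>y. b / y + b"])
  have b0: "b \<noteq> 0" using b by (rule unit_circle_nonzero)
  show "\<forall>u\<in>unit_circle n - {b}. b / (b / (u + b)) + b = u"
    using b0 by (auto simp: add.assoc add_eq_0_iff_CHAR_2[OF CHAR_eq_2])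
  show "(\<lambda>u. b / (u + b)) ` (unit_circle n - {b}) \<subseteq> {y. y + cj y = 1}"
  proof clarify
    fix u assume u: "u \<in> unit_circle n" "u \<noteq> b"
    then have u0: "u \<noteq> 0" and ub: "u + b \<noteq> 0"
      using unit_circle_nonzero add_eq_0_iff_CHAR_2[OF CHAR_eq_2] by auto
    have "cj (b / (u + b)) = inverse b / (inverse u + inverse b)"
      using u b by (simp add: power_divide cj_add cj_unit_circle)
    also have "\<dots> = u / (u + b)"
      using u0 b0 ub by (simp add: field_simps add.commute)
    finally show "b / (u + b) + cj (b / (u + b)) = 1"
      using ub by (simp add: add_divide_distrib[symmetric] add.commute)
  qed
  have "y \<noteq> 0 \<and> b / y + b \<in> unit_circle n" if "y + cj y = 1" for y
  proof -
    have "cj y = (y + cj y) + y" by (simp add: add.commute add.left_commute)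
    then have cj_y: "cj y = 1 + y" by (simp only: that)
    then have y0: "y \<noteq> 0" and cj_y0: "cj y \<noteq> 0"
      by (auto simp: power_0_left)
    have "(b * cj y / y) * cj (b * cj y / y) = (b * cj b) * (cj y / y) * (y / cj y)"
      by (simp add: power_mult_distrib power_divide)
    also have "\<dots> = 1"
      using b y0 cj_y0 by (simp add: unit_circle_iff)
    finally show ?thesis
      using y0 by (simp add: unit_circle_iff cj_y field_simps)
  qed
  then show "\<forall>y\<in>{y. y + cj y = 1}. b / (b / y + b + b) = y"
    and "(\<lambda>y. b / y + b) ` {y. y + cj y = 1} \<subseteq> unit_circle n - {b}"
    using b0 by (auto simp: add.assoc)
qed

lemma sum_unit_circle_eq_sum_trace_one:
  assumes b: "b \<in> unit_circle n"
  shows "(\<Sum>u\<in>unit_circle n. chi (tr 1 (2 * n) (a / (u + b))))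
    = 1 + (\<Sum>y | y + cj y = 1. chi (tr 1 (2 * n) (a / b * y)))"
proof -
  have "(\<Sum>u\<in>unit_circle n. chi (tr 1 (2 * n) (a / (u + b))))
      = 1 + (\<Sum>u\<in>unit_circle n - {b}. chi (tr 1 (2 * n) (a / b * (b / (u + b)))))"
    using b unit_circle_nonzero[OF b] by (simp add: sum.remove)
  also have "\<dots> = 1 + (\<Sum>y | y + cj y = 1. chi (tr 1 (2 * n) (a / b * y)))"
    using sum.reindex_bij_betw[OF bij_betw_unit_circle_trace_one[OF b],
        of "\<lambda>y. chi (tr 1 (2 * n) (a / b * y))"] by (simp only:)
  finally show ?thesis .
qed

lemma sum_trace_one_chi_tr_2n:
  "(\<Sum>y | y + cj y = 1. chi (tr 1 (2 * n) (d * y)))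
    = (if d \<in> subF n then 2 ^ n * chi (tr 1 n d) else 0)"
proof (cases "d \<in> subF n")
  case True
  have "(\<Sum>y | y + cj y = 1. chi (tr 1 (2 * n) (d * y))) = (\<Sum>y | y + cj y = 1. chi (tr 1 n d))"
    using True by (intro sum.cong) (simp_all add: tr_2n_mult_subF)
  also have "\<dots> = 2 ^ n * chi (tr 1 n d)"
    by (simp add: card_add_cj_fibre subF_iff)
  finally show ?thesis using True by simp
next
  case False
  define e where "e = d + cj d"
  have "e \<in> subF n" by (simp add: e_def add_cj_subF)
  moreover have "e \<noteq> 0"
    using False unfolding e_def add_eq_0_iff_CHAR_2[OF CHAR_eq_2] subF_iff by auto
  ultimately obtain t where "t \<in> subF n" "tr 1 n (t * e) = 1"
    using ex_tr_n_mult_eq_1 by blast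
  then have t: "cj t = t" "tr 1 (2 * n) (d * t) = 1"
    using tr_2n_mult_subF[of t d] by (simp_all add: subF_iff e_def mult.commute)
  have "(\<Sum>y | y + cj y = 1. chi (tr 1 (2 * n) (d * y))) = 0"
  proof (rule sum_eq_0_if_translation_negates[OF CHAR_eq_2, where t = t])
    show "y + t \<in> {y. y + cj y = 1}" if "y \<in> {y. y + cj y = 1}" for y
      using that t(1) by (simp add: cj_add add.assoc add.left_commute)
    show "chi (tr 1 (2 * n) (d * (y + t))) = - chi (tr 1 (2 * n) (d * y))" for y
      using t(2) by (simp add: distrib_left chi_tr_2n_add)
  qed
  then show ?thesis using False by simp
qed

section \<open>Kloosterman sums\<close>

lemma plus_inverse_unit_circle_subF: "(u::'a) \<in> unit_circle n \<Longrightarrow> u + inverse u \<in> subF n"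
  by (simp add: subF_iff cj_add cj_unit_circle power_inverse add.commute inverse_unit_circle)

lemma plus_inverse_subF: "(v::'a) \<in> subF n \<Longrightarrow> v + inverse v \<in> subF n"
  by (simp add: subF_iff cj_add power_inverse)

lemma sum_plus_inverse_double_cover:
  fixes f :: "'a \<Rightarrow> 'b::comm_semiring_1"
  shows "(\<Sum>w\<in>unit_circle n - {1}. f (w + inverse w)) + (\<Sum>v\<in>subF n - {0, 1}. f (v + inverse v))
    = 2 * (\<Sum>y\<in>subF n - {0}. f y)"
proof -
  let ?psi = "\<lambda>w::'a. w + inverse w"
  define D where "D = (unit_circle n - {1}) \<union> (subF n - {0, 1 :: 'a})"
  have D: "finite D" "0 \<notin> D" "1 \<notin> D" "\<And>w. w \<in> D \<Longrightarrow> inverse w \<in> D"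
    by (auto simp: D_def inverse_unit_circle subF_iff power_inverse dest: unit_circle_nonzero)
  have disjoint: "(unit_circle n - {1}) \<inter> (subF n - {0, 1 :: 'a}) = {}"
    using unit_circle_subF_eq_1 by blast
  have "?psi ` D \<subseteq> subF n - {0}"
    using D(2,3) by (auto simp: D_def plus_inverse_unit_circle_subF plus_inverse_subF
        plus_inverse_eq_0_iff_CHAR_2[OF CHAR_eq_2])
  moreover have "card D = 2 * card (?psi ` D)"
    using sum_plus_inverse_CHAR_2[OF CHAR_eq_2 D, of "\<lambda>_. 1::nat"] by simp
  moreover have "card D = 2 * (2 ^ n - 1)"
  proof -
    have "card (subF n - {0, 1 :: 'a}) = 2 ^ n - 2"
      by (subst card_Diff_subset) (auto simp: subF_iff card_subF)
    then show ?thesis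
      using disjoint two_le_two_power_n by (simp add: D_def card_Un_disjoint card_unit_circle)
  qed
  ultimately have "?psi ` D = subF n - {0}"
    by (intro card_subset_eq) (simp_all add: card_Diff_singleton card_subF subF_iff)
  then have "(\<Sum>w\<in>D. f (?psi w)) = 2 * (\<Sum>y\<in>subF n - {0}. f y)"
    using sum_plus_inverse_CHAR_2[OF CHAR_eq_2 D, of f] by simp
  then show ?thesis
    using disjoint by (simp add: D_def sum.union_disjoint)
qed

lemma ex_square_root_subF:
  assumes "(A::'a) \<in> subF n"
  shows "\<exists>s\<in>subF n. s ^ 2 = A"
proof -
  have "(\<lambda>x::'a. x ^ 2) ` subF n = subF n"
  proof (rule square_image_eq_CHAR_2[OF CHAR_eq_2])
    fix x :: 'a assume "x \<in> subF n"
    moreover have "cj (x ^ 2) = (cj x) ^ 2" by (simp only: power_mult[symmetric] mult.commute)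
    ultimately show "x ^ 2 \<in> subF n" by (simp add: subF_iff)
  qed simp
  then show ?thesis
    using assms by (metis imageE)
qed

lemma sum_unit_circle_square: "(\<Sum>w\<in>unit_circle n. h w) = (\<Sum>w\<in>unit_circle n. h ((w::'a) ^ 2))"
proof -
  have "(\<lambda>x::'a. x ^ 2) ` unit_circle n = unit_circle n"
    by (rule square_image_eq_CHAR_2[OF CHAR_eq_2]) (simp_all add: mult_unit_circle power2_eq_square)
  then show ?thesis
    using sum.reindex[OF inj_on_subset[OF inj_square_CHAR_2[OF CHAR_eq_2]], of "unit_circle n" h]
    by simp
qed

lemma sum_unit_circle_chi_tr_2n_square:
  fixes s :: 'a
  assumes s: "s \<in> subF n"
  shows "(\<Sum>w\<in>unit_circle n. chi (tr 1 (2 * n) (s ^ 2 * w)))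
    = 1 + (\<Sum>w\<in>unit_circle n - {1}. chi (tr 1 n (s * (w + inverse w))))"
proof -
  have "(\<Sum>w\<in>unit_circle n. chi (tr 1 (2 * n) (s ^ 2 * w)))
      = (\<Sum>w\<in>unit_circle n. chi (tr 1 (2 * n) ((s * w) ^ 2)))"
    by (subst sum_unit_circle_square) (simp add: power_mult_distrib)
  also have "\<dots> = (\<Sum>w\<in>unit_circle n. chi (tr 1 n (s * (w + inverse w))))"
  proof (rule sum.cong)
    fix w :: 'a assume "w \<in> unit_circle n"
    have "tr 1 (2 * n) ((s * w) ^ 2) = tr 1 (2 * n) (s * w)"
      by (rule tr_square_eq) simp
    also have "\<dots> = tr 1 n (s * (w + inverse w))"
      using \<open>w \<in> unit_circle n\<close> by (simp add: tr_2n_mult_subF[OF s] cj_unit_circle)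
    finally show "chi (tr 1 (2 * n) ((s * w) ^ 2)) = chi (tr 1 n (s * (w + inverse w)))"
      by simp
  qed simp
  also have "\<dots> = 1 + (\<Sum>w\<in>unit_circle n - {1}. chi (tr 1 n (s * (w + inverse w))))"
    by (simp add: sum.remove[of _ 1])
  finally show ?thesis .
qed

lemma kloosterman_square:
  fixes s :: 'a
  assumes s: "s \<in> subF n" "s \<noteq> 0"
  shows "kloosterman n (s ^ 2) = 2 + (\<Sum>v\<in>subF n - {0, 1}. chi (tr 1 n (s * (v + inverse v))))"
proof -
  have "kloosterman n (s ^ 2) = 1 + (\<Sum>x\<in>subF n - {0}. chi (tr 1 n (inverse x + s ^ 2 * x)))"
    unfolding kloosterman_def by (simp add: sum.remove[of _ 0] subF_iff)
  also have "(\<Sum>x\<in>subF n - {0}. chi (tr 1 n (inverse x + s ^ 2 * x)))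
      = (\<Sum>v\<in>subF n - {0}. chi (tr 1 n (s * (v + inverse v))))"
  proof (rule sum.reindex_bij_witness[of _ "\<lambda>v. v / s" "\<lambda>x. x * s"])
    fix x :: 'a assume x: "x \<in> subF n - {0}"
    show "x * s / s = x" "x * s \<in> subF n - {0}"
      using x s by (simp_all add: subF_iff power_mult_distrib)
    have "s * (x * s + inverse (x * s)) = inverse x + s ^ 2 * x"
      using s x by (simp add: field_simps power2_eq_square)
    then show "chi (tr 1 n (s * (x * s + inverse (x * s)))) = chi (tr 1 n (inverse x + s ^ 2 * x))"
      by simp
  next
    fix v :: 'a assume v: "v \<in> subF n - {0}"
    show "v / s * s = v" "v / s \<in> subF n - {0}"
      using v s by (simp_all add: subF_iff power_divide)
  qed
  also have "subF n - {0} = insert 1 (subF n - {0, 1 :: 'a})"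
    by (auto simp: subF_iff)
  finally show ?thesis by simp
qed

lemma sum_unit_circle_chi_tr_2n_eq_kloosterman:
  fixes A :: 'a
  assumes A: "A \<in> subF n" "A \<noteq> 0"
  shows "(\<Sum>w\<in>unit_circle n. chi (tr 1 (2 * n) (A * w))) = 1 - kloosterman n A"
proof -
  obtain s where s: "s \<in> subF n" "s ^ 2 = A"
    using ex_square_root_subF[OF A(1)] by blast
  have "s \<noteq> 0" using s A(2) by auto
  define G where "G y = chi (tr 1 n (s * y))" for y
  have "(\<Sum>y\<in>subF n. G y) = 0"
    using sum_subF_chi_tr_n[OF s(1)] \<open>s \<noteq> 0\<close> by (simp add: G_def mult.commute)
  then have "(\<Sum>y\<in>subF n - {0}. G y) = -1"
    by (simp add: sum_diff1 subF_iff G_def)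
  then have "(\<Sum>w\<in>unit_circle n - {1}. G (w + inverse w)) + (\<Sum>v\<in>subF n - {0, 1}. G (v + inverse v))
      = -2"
    using sum_plus_inverse_double_cover[of G] by simp
  then show ?thesis
    using sum_unit_circle_chi_tr_2n_square[OF s(1)] kloosterman_square[OF s(1) \<open>s \<noteq> 0\<close>]
    by (simp add: s(2) G_def)
qed

lemma four_dvd_kloosterman:
  fixes A :: 'a
  assumes "2 \<le> n" and A: "A \<in> subF n" "A \<noteq> 0"
  shows "4 dvd kloosterman n A"
proof -
  let ?V = "unit_circle n - {1} :: 'a set"
  let ?psi = "\<lambda>w::'a. w + inverse w"
  define G where "G y = chi (tr 1 n (A * y))" for y
  have V: "finite ?V" "0 \<notin> ?V" "1 \<notin> ?V" "\<And>w. w \<in> ?V \<Longrightarrow> inverse w \<in> ?V"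
    by (auto simp: inverse_unit_circle dest: unit_circle_nonzero)
  have "(\<Sum>w\<in>unit_circle n. chi (tr 1 (2 * n) (A * w))) = (\<Sum>w\<in>unit_circle n. G (?psi w))"
    by (rule sum.cong) (simp_all add: G_def tr_2n_mult_subF[OF A(1)] cj_unit_circle)
  also have "\<dots> = G (?psi 1) + (\<Sum>w\<in>?V. G (?psi w))"
    by (simp add: sum.remove[of _ 1])
  also have "(\<Sum>w\<in>?V. G (?psi w)) = 2 * (\<Sum>y\<in>?psi ` ?V. G y)"
    by (rule sum_plus_inverse_CHAR_2[OF CHAR_eq_2 V])
  finally have sum_eq: "(\<Sum>w\<in>unit_circle n. chi (tr 1 (2 * n) (A * w)))
      = 1 + 2 * (\<Sum>y\<in>?psi ` ?V. G y)"
    by (simp add: G_def)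
  have "2 * card (?psi ` ?V) = 2 ^ n"
    using sum_plus_inverse_CHAR_2[OF CHAR_eq_2 V, of "\<lambda>_. 1::nat"]
    by (simp add: card_Diff_singleton card_unit_circle)
  moreover have "(4::nat) dvd 2 ^ n"
    using le_imp_power_dvd[OF \<open>2 \<le> n\<close>, of "2::nat"] by simp
  ultimately have "even (card (?psi ` ?V))" by presburger
  moreover have "even ((\<Sum>y\<in>?psi ` ?V. G y) + int (card (?psi ` ?V)))"
    unfolding G_def by (rule even_sum_chi_add_card) simp
  ultimately have "even (\<Sum>y\<in>?psi ` ?V. G y)" by simp
  then obtain k where "(\<Sum>y\<in>?psi ` ?V. G y) = 2 * k" by (elim evenE)
  then have "kloosterman n A = 4 * - k"
    using sum_eq sum_unit_circle_chi_tr_2n_eq_kloosterman[OF A] by simp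
  then show ?thesis by (rule dvdI)
qed

section \<open>A Moebius transformation of the unit circle\<close>

lemma one_add_mult_cj_neq_0: "(b::'a) \<notin> unit_circle n \<Longrightarrow> 1 + b * cj b \<noteq> 0"
  by (auto simp: unit_circle_iff add_eq_0_iff_CHAR_2[OF CHAR_eq_2])

lemma moebius_unit_circle:
  fixes b u :: 'a
  assumes b: "b \<notin> unit_circle n" and u: "u \<in> unit_circle n"
  shows "(1 + b * cj b) / (u + b) + cj b \<in> unit_circle n"
proof -
  have u0: "u \<noteq> 0" using u by (rule unit_circle_nonzero)
  have ub: "u + b \<noteq> 0" using u b by (auto simp: add_eq_0_iff_CHAR_2[OF CHAR_eq_2])
  have den: "1 + cj b * u \<noteq> 0"
  proof
    assume "1 + cj b * u = 0"
    then have "cj b = inverse u"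
      by (metis add_eq_0_iff_CHAR_2[OF CHAR_eq_2] inverse_unique mult.commute)
    then have "b = u"
      using u by (metis cj_cj cj_unit_circle inverse_inverse_eq power_inverse)
    then show False using u b by simp
  qed
  have eq: "(1 + b * cj b) / (u + b) + cj b = (1 + cj b * u) / (u + b)"
    using ub by (simp add: field_simps)
  have "cj ((1 + cj b * u) / (u + b)) = (1 + b * inverse u) / (inverse u + cj b)"
    using u by (simp add: power_divide cj_add power_mult_distrib cj_unit_circle)
  also have "\<dots> = ((u + b) * inverse u) / ((1 + cj b * u) * inverse u)"
    using u0 by (simp add: field_simps)
  also have "\<dots> = (u + b) / (1 + cj b * u)"
    using u0 by simp
  finally show ?thesis
    using ub den by (simp add: unit_circle_iff eq)
qed

lemma bij_betw_moebius_unit_circle: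
  assumes "(b::'a) \<notin> unit_circle n"
  shows "bij_betw (\<lambda>u. (1 + b * cj b) / (u + b) + cj b) (unit_circle n) (unit_circle n)"
proof (rule bij_betw_imageI)
  show "inj_on (\<lambda>u. (1 + b * cj b) / (u + b) + cj b) (unit_circle n)"
    using assms one_add_mult_cj_neq_0[OF assms]
    by (auto intro!: inj_onI simp: field_simps add_eq_0_iff_CHAR_2[OF CHAR_eq_2])
  then show "(\<lambda>u. (1 + b * cj b) / (u + b) + cj b) ` unit_circle n = unit_circle n"
    using moebius_unit_circle[OF assms] by (intro endo_inj_surj) auto
qed

lemma sum_unit_circle_outside_eq_kloosterman:
  fixes a b :: 'a
  assumes a: "a \<in> subF n" "a \<noteq> 0" and b: "b \<notin> unit_circle n"
  defines "A \<equiv> a / (1 + b * cj b)"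
  shows "(\<Sum>u\<in>unit_circle n. chi (tr 1 (2 * n) (a / (u + b))))
    = chi (tr 1 (2 * n) (A * cj b)) * (1 - kloosterman n A)"
proof -
  let ?\<mu> = "\<lambda>u. (1 + b * cj b) / (u + b) + cj b"
  have A: "A \<in> subF n" "A \<noteq> 0"
    using a mult_cj_subF[of b] one_add_mult_cj_neq_0[OF b]
    by (simp_all add: A_def subF_iff cj_add power_divide)
  have "A * ?\<mu> u = a / (u + b) + A * cj b" for u
  proof -
    have "A * ((1 + b * cj b) / (u + b)) = a / (u + b)"
      using one_add_mult_cj_neq_0[OF b] by (simp add: A_def)
    then show ?thesis by (simp only: distrib_left)
  qed
  then have "chi (tr 1 (2 * n) (a / (u + b))) = chi (tr 1 (2 * n) (A * ?\<mu> u)) * chi (tr 1 (2 * n) (A * cj b))"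
    for u by (metis add.assoc add_self add_0_right chi_tr_2n_add)
  then have "(\<Sum>u\<in>unit_circle n. chi (tr 1 (2 * n) (a / (u + b))))
      = (\<Sum>u\<in>unit_circle n. chi (tr 1 (2 * n) (A * ?\<mu> u))) * chi (tr 1 (2 * n) (A * cj b))"
    by (simp add: sum_distrib_right)
  also have "(\<Sum>u\<in>unit_circle n. chi (tr 1 (2 * n) (A * ?\<mu> u))) = (\<Sum>w\<in>unit_circle n. chi (tr 1 (2 * n) (A * w)))"
    by (rule sum.reindex_bij_betw[OF bij_betw_moebius_unit_circle[OF b]])
  also have "\<dots> = 1 - kloosterman n A"
    using A by (rule sum_unit_circle_chi_tr_2n_eq_kloosterman)
  finally show ?thesis by (simp add: mult.commute)
qed

lemma tr_2n_add_tr_2n_eq_tr_n: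
  fixes a b :: 'a
  assumes "a \<in> subF n" "b \<noteq> 0" "1 + b * cj b \<noteq> 0"
  shows "tr 1 (2 * n) (a / (1 + b * cj b) * cj b) + tr 1 (2 * n) (a / b)
    = tr 1 n (a * (b + cj b) / ((1 + b * cj b) * (b * cj b)))"
proof -
  let ?\<gamma> = "1 + b * cj b" and ?\<beta> = "b * cj b"
  have "a / ?\<gamma> \<in> subF n"
    using assms(1) mult_cj_subF[of b] by (simp add: subF_iff cj_add power_divide)
  then have "tr 1 (2 * n) (a / ?\<gamma> * cj b) = tr 1 n (a / ?\<gamma> * (cj b + b))"
    using tr_2n_mult_subF[of "a / ?\<gamma>" "cj b"] by (simp only: cj_cj)
  moreover have "tr 1 (2 * n) (a / b) = tr 1 n (a * (inverse b + inverse (cj b)))"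
    using assms(1) tr_2n_mult_subF[of a "inverse b"] by (simp add: power_inverse divide_inverse)
  ultimately have "tr 1 (2 * n) (a / ?\<gamma> * cj b) + tr 1 (2 * n) (a / b)
      = tr 1 n (a * (b + cj b) * (1 / ?\<gamma> + 1 / ?\<beta>))"
    using assms(2) by (simp add: tr_add[OF CHAR_eq_2, symmetric] field_simps)
  also have "1 / ?\<gamma> + 1 / ?\<beta> = (?\<beta> + ?\<gamma>) / (?\<gamma> * ?\<beta>)"
    using assms(2,3) by (simp add: field_simps)
  also have "?\<beta> + ?\<gamma> = 1"
    by (simp add: add.left_commute)
  finally show ?thesis by simp
qed

section \<open>Bentness of \<open>h1\<close>\<close>

lemma bent_iff_unit_circle:
  fixes a b :: 'a
  assumes a: "a \<in> subF n" "a \<noteq> 0" and b: "b \<in> unit_circle n"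
  shows "bent (2 * n) (\<lambda>x. tr 1 (2 * n) (a / (polar x + b)))
    \<longleftrightarrow> b \<noteq> 1 \<and> tr 1 (2 * n) (a / b) = 0"
proof -
  let ?\<Lambda> = "\<Sum>u\<in>unit_circle n. chi (tr 1 (2 * n) (a / (u + b)))"
  have bent_iff: "bent (2 * n) (\<lambda>x. tr 1 (2 * n) (a / (polar x + b))) \<longleftrightarrow> ?\<Lambda> = chi (tr 1 (2 * n) (a / b))"
    if "\<bar>?\<Lambda> - chi (tr 1 (2 * n) (a / b))\<bar> < 2 * 2 ^ n"
    using bent_polar_iff[of "\<lambda>u. tr 1 (2 * n) (a / (u + b))", OF tr_2n_in_01] that by simp
  have "a / b \<in> subF n \<longleftrightarrow> b = 1"
  proof
    assume "a / b \<in> subF n"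
    then have "b \<in> subF n"
      using a unit_circle_nonzero[OF b] by (simp add: subF_iff power_divide field_simps)
    then show "b = 1" using b by (rule unit_circle_subF_eq_1[rotated])
  qed (use a in simp)
  moreover have "?\<Lambda> = 1 + (if a / b \<in> subF n then 2 ^ n * chi (tr 1 n (a / b)) else 0)"
    unfolding sum_unit_circle_eq_sum_trace_one[OF b] sum_trace_one_chi_tr_2n ..
  ultimately have \<Lambda>: "?\<Lambda> = 1 + (if b = 1 then 2 ^ n * chi (tr 1 n a) else 0)"
    by auto
  show ?thesis
  proof (cases "b = 1")
    case True
    then have "?\<Lambda> - chi (tr 1 (2 * n) (a / b)) = 2 ^ n * chi (tr 1 n a)"
      using a \<Lambda> by (simp add: tr_2n_subF)
    then show ?thesis
      using bent_iff True chi_cases[of "tr 1 n a"] by auto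
  next
    case False
    then have "\<bar>?\<Lambda> - chi (tr 1 (2 * n) (a / b))\<bar> < 2 * 2 ^ n"
      using \<Lambda> chi_cases[of "tr 1 (2 * n) (a / b)"] n_pos by auto
    then show ?thesis
      using bent_iff False \<Lambda> by (auto simp: chi_def)
  qed
qed

lemma two_le_n_if_not_unit_circle:
  assumes "(b::'a) \<noteq> 0" "b \<notin> unit_circle n"
  shows "2 \<le> n"
proof -
  have "n \<noteq> 1"
    using polar_unit_circle[OF assms(1)] assms(2) by (auto simp: polar_def)
  then show ?thesis using n_pos by simp
qed

lemma bent_iff_not_unit_circle:
  fixes a b :: 'a
  assumes a: "a \<in> subF n" "a \<noteq> 0" and b: "b \<noteq> 0" "b \<notin> unit_circle n"
  shows "bent (2 * n) (\<lambda>x. tr 1 (2 * n) (a / (polar x + b)))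
    \<longleftrightarrow> kloosterman n (a / (1 + b * cj b)) = 0
      \<and> tr 1 n (a * (b + cj b) / ((1 + b * cj b) * (b * cj b))) = 0"
proof -
  define A where "A = a / (1 + b * cj b)"
  define K where "K = kloosterman n A"
  define E where "E = tr 1 n (a * (b + cj b) / ((1 + b * cj b) * (b * cj b)))"
  define c where "c = chi (tr 1 (2 * n) (A * cj b))"
  let ?\<Lambda> = "\<Sum>u\<in>unit_circle n. chi (tr 1 (2 * n) (a / (u + b)))"
  have \<gamma>: "1 + b * cj b \<noteq> 0"
    using b(2) by (rule one_add_mult_cj_neq_0)
  have A: "A \<in> subF n" "A \<noteq> 0"
    using a mult_cj_subF[of b] \<gamma> by (simp_all add: A_def subF_iff cj_add power_divide)
  have \<Lambda>: "?\<Lambda> = c * (1 - K)"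
    using sum_unit_circle_outside_eq_kloosterman[OF a b(2)] by (simp add: A_def K_def c_def)
  have "\<bar>?\<Lambda>\<bar> \<le> int (card (unit_circle n :: 'a set))"
    by (rule abs_sum_chi_le_card)
  then have "\<bar>?\<Lambda>\<bar> \<le> 2 ^ n + 1"
    by (simp add: card_unit_circle)
  moreover have "(4::int) \<le> 2 ^ n"
    using power_increasing[OF two_le_n_if_not_unit_circle[OF b], of "2::int"] by simp
  ultimately have "\<bar>?\<Lambda> - chi (tr 1 (2 * n) (a / b))\<bar> < 2 * 2 ^ n"
    using chi_cases[of "tr 1 (2 * n) (a / b)"] by auto
  then have "bent (2 * n) (\<lambda>x. tr 1 (2 * n) (a / (polar x + b))) \<longleftrightarrow> ?\<Lambda> = chi (tr 1 (2 * n) (a / b))"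
    using bent_polar_iff[of "\<lambda>u. tr 1 (2 * n) (a / (u + b))", OF tr_2n_in_01] by simp
  also have "\<dots> \<longleftrightarrow> 1 - K = c * chi (tr 1 (2 * n) (a / b))"
    using chi_cases[of "tr 1 (2 * n) (A * cj b)"] by (auto simp: \<Lambda> c_def)
  also have "c * chi (tr 1 (2 * n) (a / b)) = chi E"
    using tr_2n_add_tr_2n_eq_tr_n[OF a(1) b(1) \<gamma>]
    by (simp add: c_def E_def A_def chi_add_CHAR_2[OF CHAR_eq_2 tr_2n_in_01 tr_2n_in_01, symmetric]
        tr_add[OF CHAR_eq_2, symmetric])
  also have "1 - K = chi E \<longleftrightarrow> K = 0 \<and> E = 0"
  proof -
    have "1 - K \<noteq> -1"
      using four_dvd_kloosterman[OF two_le_n_if_not_unit_circle[OF b] A] by (auto simp: K_def)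
    then show ?thesis by (auto simp: chi_def)
  qed
  finally show ?thesis by (simp add: K_def A_def E_def)
qed

end

theorem theorem1:
  fixes n :: nat and a1 b :: "'a::{field,finite}"
  assumes "n > 0"
    and "card (UNIV :: 'a set) = 2 ^ (2 * n)"
    and "a1 \<in> subF n" and "a1 \<noteq> 0"
    and "b \<noteq> 0"
  shows "bent (2 * n) (\<lambda>x. tr 1 (2 * n) (a1 / (x ^ (2 ^ n - 1) + b)))
    \<longleftrightarrow>
     ((b \<in> unit_circle n - {1} \<and> tr 1 (2 * n) (a1 / b) = 0) \<or>
      (b \<notin> unit_circle n \<and>
       kloosterman n (a1 / (1 + b * b ^ (2 ^ n))) = 0 \<and>
       tr 1 n (a1 * (b + b ^ (2 ^ n)) / ((1 + b * b ^ (2 ^ n)) * (b * b ^ (2 ^ n)))) = 0))"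
proof -
  interpret gf2_2n n "TYPE('a)"
    using assms(1,2) by unfold_locales
  have h: "(\<lambda>x. tr 1 (2 * n) (a1 / (x ^ (2 ^ n - 1) + b))) = (\<lambda>x. tr 1 (2 * n) (a1 / (polar x + b)))"
    by (simp add: polar_def)
  show ?thesis
  proof (cases "b \<in> unit_circle n")
    case True
    then show ?thesis
      unfolding h using bent_iff_unit_circle[OF assms(3,4) True] by auto
  next
    case False
    then show ?thesis
      unfolding h using bent_iff_not_unit_circle[OF assms(3-5) False] by auto
  qed
qed

end
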